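(* Let $Y=[y_{ij}]$ be an $N\times k$ array with entries in $\{-1,1\}$, let $\ell\subseteq\{1,\dots,k\}$ with $|\ell|=r>0$, and let $g\in G(k)^{\rm OD}$. Then $J_r(\ell)(g(Y))=\pm J_{r'}(\ell')(Y)$ for some $\ell'\subseteq\{1,\dots,k\}$, where $r'=|\ell'|\in\{r,r+1\}$ if $r$ is odd and $r'\in\{r,r-1\}$ if $r$ is even.
   Context: For $\ell\subseteq\{1,\dots,k\}$ with $|\ell|=r\ge1$, the $J$-characteristic is $J_r(\ell)(Y)=\sum_{i=1}^N\prod_{j\in\ell}y_{ij}$, and $J_0(\emptyset)(Y)=N$. $G(k)^{\rm OD}$ is the group of permutations of $\{-1,1\}^k$ generated by coordinate permutations, sign changes of single coordinates, and $R_i(z_1,\dots,z_k)=(z_1z_i,\dots,z_{i-1}z_i,z_i,z_{i+1}z_i,\dots,z_kz_i)$ for $i=1,\dots,k$; $g(Y)$ is obtained by applying $g$ to each row of $Y$. *)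

theory Defs
  imports "HOL-Combinatorics.Permutations"
begin

text \<open>A row z of the array is a function nat => int; only the coordinates 1..k matter.
  The generators of G(k)^OD act on coordinates 1..k and leave other coordinates unchanged.\<close>

definition coord_perm :: "(nat \<Rightarrow> nat) \<Rightarrow> (nat \<Rightarrow> int) \<Rightarrow> (nat \<Rightarrow> int)" where
  "coord_perm \<sigma> z = (\<lambda>j. z (\<sigma> j))"

definition sign_change :: "nat \<Rightarrow> (nat \<Rightarrow> int) \<Rightarrow> (nat \<Rightarrow> int)" where
  "sign_change i z = z(i := - z i)"

definition R_map :: "nat \<Rightarrow> nat \<Rightarrow> (nat \<Rightarrow> int) \<Rightarrow> (nat \<Rightarrow> int)" where
  "R_map k i z = (\<lambda>j. if j \<in> {1..k} \<and> j \<noteq> i then z j * z i else z j)"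

text \<open>Since each generator acts as a
  permutation of the finite set {-1,1}^k, the generated group equals the generated monoid,
  i.e. the closure of the identity under composition with generators.\<close>

inductive_set G_OD :: "nat \<Rightarrow> ((nat \<Rightarrow> int) \<Rightarrow> (nat \<Rightarrow> int)) set" for k :: nat where
  G_id: "id \<in> G_OD k"
| G_perm: "g \<in> G_OD k \<Longrightarrow> \<sigma> permutes {1..k} \<Longrightarrow> coord_perm \<sigma> \<circ> g \<in> G_OD k"
| G_sign: "g \<in> G_OD k \<Longrightarrow> i \<in> {1..k} \<Longrightarrow> sign_change i \<circ> g \<in> G_OD k"
| G_R: "g \<in> G_OD k \<Longrightarrow> i \<in> {1..k} \<Longrightarrow> R_map k i \<circ> g \<in> G_OD k"

definition pm_array :: "nat \<Rightarrow> nat \<Rightarrow> (nat \<Rightarrow> nat \<Rightarrow> int) \<Rightarrow> bool" where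
  "pm_array N k Y \<longleftrightarrow> (\<forall>i\<in>{1..N}. \<forall>j\<in>{1..k}. Y i j \<in> {-1, 1})"

definition apply_rows :: "((nat \<Rightarrow> int) \<Rightarrow> (nat \<Rightarrow> int)) \<Rightarrow> (nat \<Rightarrow> nat \<Rightarrow> int) \<Rightarrow> (nat \<Rightarrow> nat \<Rightarrow> int)" where
  "apply_rows g Y = (\<lambda>i. g (Y i))"

text \<open>J-characteristic J_r(l)(Y), with r = card l (for l = {} this is N).\<close>
definition J_char :: "nat \<Rightarrow> nat set \<Rightarrow> (nat \<Rightarrow> nat \<Rightarrow> int) \<Rightarrow> int" where
  "J_char N l Y = (\<Sum>i\<in>{1..N}. \<Prod>j\<in>l. Y i j)"

end

theory Submission
  imports Defs
begin

text \<open>On \<open>{-1,1}\<^sup>k\<close> every generator turns the monomial \<open>\<Prod>j\<in>\<ell>. z j\<close> into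
  \<open>\<plusminus>\<Prod>j\<in>\<ell>'. z j\<close>: a coordinate permutation relabels \<open>\<ell>\<close>, a sign change only
  flips the sign, and \<open>R\<^sub>i\<close> multiplies the monomial by \<open>z i ^ |\<ell> - {i}|\<close>, which
  (as \<open>z i * z i = 1\<close>) toggles \<open>i\<close> in \<open>\<ell>\<close> exactly when \<open>|\<ell> - {i}|\<close> is odd.
  In every case \<open>\<lceil>|\<ell>|/2\<rceil>\<close> is unchanged, so by induction on the word in the
  generators \<open>J\<^sub>r(\<ell>)(g(Y)) = \<plusminus>J\<^sub>r\<^sub>'(\<ell>')(Y)\<close> with \<open>\<lceil>r'/2\<rceil> = \<lceil>r/2\<rceil>\<close>,
  which is exactly the asserted constraint on \<open>r'\<close>.\<close>

definition pm_vec :: "nat \<Rightarrow> (nat \<Rightarrow> int) \<Rightarrow> bool" where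
  "pm_vec k z \<longleftrightarrow> (\<forall>j\<in>{1..k}. z j \<in> {-1, 1})"

lemma pm_vec_power:
  assumes "pm_vec k z" "i \<in> {1..k}"
  shows "z i ^ n = (if even n then 1 else z i)"
proof -
  have "z i = -1 \<or> z i = 1"
    using assms by (auto simp: pm_vec_def)
  then show ?thesis
    by auto
qed

lemma pm_vec_coord_perm:
  "\<sigma> permutes {1..k} \<Longrightarrow> pm_vec k z \<Longrightarrow> pm_vec k (coord_perm \<sigma> z)"
  unfolding pm_vec_def coord_perm_def by (metis permutes_in_image)

lemma pm_vec_sign_change: "pm_vec k z \<Longrightarrow> pm_vec k (sign_change i z)"
  by (auto simp: pm_vec_def sign_change_def)

lemma pm_vec_R_map:
  assumes "i \<in> {1..k}" "pm_vec k z"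
  shows "pm_vec k (R_map k i z)"
  unfolding pm_vec_def
proof
  fix j assume "j \<in> {1..k}"
  then have "z i \<in> {-1, 1}" "z j \<in> {-1, 1}"
    using assms by (auto simp: pm_vec_def)
  then show "R_map k i z j \<in> {-1, 1}"
    by (auto simp: R_map_def)
qed

lemma G_OD_pm_vec: "g \<in> G_OD k \<Longrightarrow> pm_vec k z \<Longrightarrow> pm_vec k (g z)"
  by (induction g rule: G_OD.induct)
    (simp_all add: pm_vec_coord_perm pm_vec_sign_change pm_vec_R_map)

lemma prod_coord_perm:
  assumes "\<sigma> permutes A"
  shows "(\<Prod>j\<in>l. coord_perm \<sigma> z j) = (\<Prod>j\<in>\<sigma> ` l. z j)"
  by (simp add: coord_perm_def prod.reindex[OF permutes_inj_on[OF assms]])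

lemma prod_sign_change:
  assumes "finite l"
  shows "(\<Prod>j\<in>l. sign_change i z j) = (if i \<in> l then -1 else 1) * (\<Prod>j\<in>l. z j)"
proof -
  have "(\<Prod>j\<in>l. sign_change i z j) = (\<Prod>j\<in>l. (if j = i then -1 else 1) * z j)"
    by (rule prod.cong) (auto simp: sign_change_def)
  then show ?thesis
    using assms by (simp add: prod.distrib)
qed

lemma prod_R_map:
  assumes "l \<subseteq> {1..k}"
  shows "(\<Prod>j\<in>l. R_map k i z j) = (\<Prod>j\<in>l. z j) * z i ^ card (l - {i})"
proof -
  have "(\<Prod>j\<in>l. R_map k i z j) = (\<Prod>j\<in>l. z j * (if j \<in> l - {i} then z i else 1))"
    using assms by (intro prod.cong) (auto simp: R_map_def)
  also have "\<dots> = (\<Prod>j\<in>l. z j) * z i ^ card (l - {i})"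
    using finite_subset[OF assms]
    by (simp add: prod.distrib prod.If_cases Int_absorb1 Diff_eq Compl_eq)
  finally show ?thesis .
qed

definition R_support :: "nat \<Rightarrow> nat set \<Rightarrow> nat set" where
  "R_support i l =
     (if even (card (l - {i})) then l else if i \<in> l then l - {i} else insert i l)"

lemma R_support_subset: "l \<subseteq> {1..k} \<Longrightarrow> i \<in> {1..k} \<Longrightarrow> R_support i l \<subseteq> {1..k}"
  by (auto simp: R_support_def)

lemma card_R_support_half:
  assumes "finite l"
  shows "(card (R_support i l) + 1) div 2 = (card l + 1) div 2"
proof (cases "i \<in> l")
  case True
  have "card l = Suc (card (l - {i}))"
    by (rule card_Suc_Diff1[OF assms True, symmetric])
  then show ?thesis
    using assms True by (simp add: R_support_def)
next
  case False
  then show ?thesis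
    using assms by (simp add: R_support_def)
qed

lemma prod_R_map_pm_vec:
  assumes "pm_vec k z" "l \<subseteq> {1..k}" "i \<in> {1..k}"
  shows "(\<Prod>j\<in>l. R_map k i z j) = (\<Prod>j\<in>R_support i l. z j)"
proof -
  have fin: "finite l"
    using assms(2) finite_subset by blast
  have sq: "z i * z i = 1"
    using pm_vec_power[OF assms(1,3), of 2] by (simp add: power2_eq_square)
  have "(\<Prod>j\<in>l. z j) * z i = (\<Prod>j\<in>(if i \<in> l then l - {i} else insert i l). z j)"
  proof (cases "i \<in> l")
    case True
    then show ?thesis
      using fin sq by (simp add: prod.remove mult.commute mult.left_commute)
  next
    case False
    then show ?thesis
      using fin by (simp add: mult.commute)
  qed
  then show ?thesis
    by (simp add: prod_R_map[OF assms(2)] pm_vec_power[OF assms(1,3)] R_support_def)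
qed

lemma G_OD_prod_signed_monomial:
  assumes "g \<in> G_OD k" "l \<subseteq> {1..k}"
  shows "\<exists>l' \<subseteq> {1..k}. \<exists>s \<in> {1, -1::int}.
           (\<forall>z. pm_vec k z \<longrightarrow> (\<Prod>j\<in>l. g z j) = s * (\<Prod>j\<in>l'. z j)) \<and>
           (card l' + 1) div 2 = (card l + 1) div 2"
  using assms
proof (induction g arbitrary: l rule: G_OD.induct)
  case G_id
  then show ?case
    by (intro exI[of _ l] bexI[of _ 1]) auto
next
  case (G_perm g \<sigma>)
  have image: "\<sigma> ` l \<subseteq> {1..k}"
    using G_perm.prems G_perm.hyps(2) permutes_in_image by fastforce
  obtain l' s where "l' \<subseteq> {1..k}" "s \<in> {1, -1}"
    and "\<forall>z. pm_vec k z \<longrightarrow> (\<Prod>j\<in>\<sigma> ` l. g z j) = s * (\<Prod>j\<in>l'. z j)"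
    and "(card l' + 1) div 2 = (card (\<sigma> ` l) + 1) div 2"
    using G_perm.IH[OF image] by blast
  moreover have "card (\<sigma> ` l) = card l"
    using card_image[OF permutes_inj_on[OF G_perm.hyps(2)]] .
  ultimately show ?case
    by (intro exI[of _ l'] bexI[of _ s]) (auto simp: prod_coord_perm[OF G_perm.hyps(2)])
next
  case (G_sign g i)
  obtain l' s where "l' \<subseteq> {1..k}" "s \<in> {1, -1}"
    and "\<forall>z. pm_vec k z \<longrightarrow> (\<Prod>j\<in>l. g z j) = s * (\<Prod>j\<in>l'. z j)"
    and "(card l' + 1) div 2 = (card l + 1) div 2"
    using G_sign.IH[OF G_sign.prems] by blast
  moreover have "finite l"
    using G_sign.prems finite_subset by blast
  ultimately show ?case
    by (intro exI[of _ l'] bexI[of _ "(if i \<in> l then -1 else 1) * s"])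
      (auto simp: prod_sign_change)
next
  case (G_R g i)
  obtain l' s where "l' \<subseteq> {1..k}" "s \<in> {1, -1}"
    and "\<forall>z. pm_vec k z \<longrightarrow> (\<Prod>j\<in>R_support i l. g z j) = s * (\<Prod>j\<in>l'. z j)"
    and "(card l' + 1) div 2 = (card (R_support i l) + 1) div 2"
    using G_R.IH[OF R_support_subset[OF G_R.prems G_R.hyps(2)]] by blast
  moreover have "(card (R_support i l) + 1) div 2 = (card l + 1) div 2"
    using card_R_support_half finite_subset[OF G_R.prems] by blast
  moreover have "(\<Prod>j\<in>l. R_map k i (g z) j) = (\<Prod>j\<in>R_support i l. g z j)"
    if "pm_vec k z" for z
    using prod_R_map_pm_vec[OF G_OD_pm_vec[OF G_R.hyps(1) that] G_R.prems G_R.hyps(2)] .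
  ultimately show ?case
    by (intro exI[of _ l'] bexI[of _ s]) auto
qed

lemma card_from_half:
  fixes c r :: nat
  assumes "(c + 1) div 2 = (r + 1) div 2" "r > 0"
  shows "if odd r then c \<in> {r, r + 1} else c \<in> {r, r - 1}"
proof -
  have "(odd r \<longrightarrow> c = r \<or> c = r + 1) \<and> (even r \<longrightarrow> c = r \<or> c = r - 1)"
    using assms by presburger
  then show ?thesis
    by simp
qed

theorem lemma7:
  fixes N k r :: nat and Y :: "nat \<Rightarrow> nat \<Rightarrow> int" and l :: "nat set"
    and g :: "(nat \<Rightarrow> int) \<Rightarrow> (nat \<Rightarrow> int)"
  assumes "pm_array N k Y"
    and "l \<subseteq> {1..k}" and "card l = r" and "r > 0"
    and "g \<in> G_OD k"
  shows "\<exists>l' \<subseteq> {1..k}. \<exists>s \<in> {1, -1::int}.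
           J_char N l (apply_rows g Y) = s * J_char N l' Y \<and>
           (if odd r then card l' \<in> {r, r + 1} else card l' \<in> {r, r - 1})"
proof -
  obtain l' s where l': "l' \<subseteq> {1..k}" "s \<in> {1, -1::int}"
    and monomial: "\<forall>z. pm_vec k z \<longrightarrow> (\<Prod>j\<in>l. g z j) = s * (\<Prod>j\<in>l'. z j)"
    and half: "(card l' + 1) div 2 = (card l + 1) div 2"
    using G_OD_prod_signed_monomial[OF assms(5,2)] by blast
  have "\<forall>i\<in>{1..N}. pm_vec k (Y i)"
    using assms(1) by (simp add: pm_array_def pm_vec_def)
  then have "J_char N l (apply_rows g Y) = (\<Sum>i\<in>{1..N}. s * (\<Prod>j\<in>l'. Y i j))"
    unfolding J_char_def apply_rows_def using monomial by simp
  also have "\<dots> = s * J_char N l' Y"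
    by (simp add: J_char_def sum_distrib_left)
  finally show ?thesis
    using l' card_from_half[OF half[unfolded assms(3)] assms(4)] by blast
qed

end
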